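(* Let $n\ge 1$, $h=1/n$, and for $0\le i\le n$ let $\tau_i=-2\sin\frac{i\pi}{2n}$ and $\sigma_i=2\big(2+\cos\frac{i\pi}{n}\big)$. Let $\bar A,\bar D\in\mathbb{R}^{(n+1)\times(n+1)}$ be tridiagonal: $\bar A$ has diagonal $(1,2,\dots,2,1)$ and off-diagonal entries $-1$; $\bar D$ has diagonal $(2,4,\dots,4,2)$ and off-diagonal entries $1$. Let $\bar B\in\mathbb{R}^{n\times(n+1)}$ have entries $\bar B_{k,k}=-1$, $\bar B_{k,k+1}=1$ ($1\le k\le n$), other entries zero. Let $\nu_0=\nu_n=\frac1{\sqrt2}$, $\nu_j=1$ for $1\le j\le n-1$. For $0\le j\le n$ let $\bar{\bm s}_j=\nu_j\big(\sin\frac{j\pi}{2n},\sin\frac{3j\pi}{2n},\dots,\sin\frac{(2n-1)j\pi}{2n}\big)^{\mathsf T}\in\mathbb{R}^n$ (so $\bar{\bm s}_0=\bm 0$) and $\tilde{\bm c}_j=\nu_j\big(1,\cos\frac{j\pi}{n},\dots,\cos\frac{(n-1)j\pi}{n},(-1)^j\big)^{\mathsf T}\in\mathbb{R}^{n+1}$. Consider the discrete eigenvalue problem: find $\lambda\in\mathbb{R}$ and $(U,V)\in\mathbb{R}^{n\times(n+1)}\times\mathbb{R}^{(n+1)\times n}$, $(U,V)\ne(0,0)$, with $$U\bar A-\bar BV\bar B=\tfrac{h^2}{6}\lambda\,U\bar D,\qquad -\bar B^{\mathsf T}U\bar B^{\mathsf T}+\bar AV=\tfrac{h^2}{6}\lambda\,\bar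 DV.$$ Then this problem has the following $2n(n+1)$ eigen-solutions, whose eigenvectors $(U,V)$ form a basis of $\mathbb{R}^{n\times(n+1)}\times\mathbb{R}^{(n+1)\times n}$ (a complete eigen-decomposition): (i) $n^2$ eigen-solutions satisfying the discrete divergence-free constraint $\bar B^{\mathsf T}U\bar D+\bar DV\bar B=0$: $$\lambda_{i,j}=\frac{6}{h^2}\Big(\frac{\tau_i^2}{\sigma_i}+\frac{\tau_j^2}{\sigma_j}\Big),\quad U_{i,j}=\tau_j\sigma_i\,\bar{\bm s}_i\tilde{\bm c}_j^{\mathsf T},\quad V_{i,j}=-\tau_i\sigma_j\,\tilde{\bm c}_i\bar{\bm s}_j^{\mathsf T},\qquad 1\le i,j\le n;$$ (ii) $(n+1)^2-1$ (discrete curl-free) eigen-solutions with eigenvalue $0$: $$\lambda=0,\quad U^0_{i,j}=\tau_i\,\bar{\bm s}_i\tilde{\bm c}_j^{\mathsf T},\quad V^0_{i,j}=\tau_j\,\tilde{\bm c}_i\bar{\bm s}_j^{\mathsf T},\qquad 0\le i,j\le n,\ (i,j)\ne(0,0).$$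
   Context: This is the algebraic form of the lowest-order rectangular Nédélec edge-element discretization of the Maxwell eigenvalue problem $\mathrm{curl}\,\mathrm{rot}\,\bm u=\lambda\bm u$ on $[0,1]^2$ with natural boundary conditions $\mathrm{rot}\,\bm u=0$, $\bm u\cdot\bm n=0$, on a uniform $n\times n$ mesh. For column vectors $\bm a,\bm b$, $\bm a\bm b^{\mathsf T}$ denotes the outer product (written $\bm a\otimes\bm b^{\mathsf T}$ in the paper). *)

theory Defs
  imports Complex_Main
begin

text \<open>Matrices are functions nat => nat => real, indexed from 0; dimensions are
  carried explicitly.  Paper index k (1-based) for B corresponds to row k-1 here,
  while the (n+1)-dimensional indices 0..n of A, D, c are kept as 0..n.\<close>

type_synonym mat = "nat \<Rightarrow> nat \<Rightarrow> real"

definition mmul :: "nat \<Rightarrow> mat \<Rightarrow> mat \<Rightarrow> mat" where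
  "mmul k A B = (\<lambda>i j. \<Sum>l<k. A i l * B l j)"

definition mtr :: "mat \<Rightarrow> mat" where
  "mtr A = (\<lambda>i j. A j i)"

definition outer :: "(nat \<Rightarrow> real) \<Rightarrow> (nat \<Rightarrow> real) \<Rightarrow> mat" where
  "outer a b = (\<lambda>i j. a i * b j)"

definition meq :: "nat \<Rightarrow> nat \<Rightarrow> mat \<Rightarrow> mat \<Rightarrow> bool" where
  "meq r c X Y \<longleftrightarrow> (\<forall>i<r. \<forall>j<c. X i j = Y i j)"

definition mnz :: "nat \<Rightarrow> nat \<Rightarrow> mat \<Rightarrow> bool" where
  "mnz r c X \<longleftrightarrow> (\<exists>i<r. \<exists>j<c. X i j \<noteq> 0)"

definition tau :: "nat \<Rightarrow> nat \<Rightarrow> real" where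
  "tau n i = - 2 * sin (real i * pi / (2 * real n))"

definition sigma :: "nat \<Rightarrow> nat \<Rightarrow> real" where
  "sigma n i = 2 * (2 + cos (real i * pi / real n))"

definition nu :: "nat \<Rightarrow> nat \<Rightarrow> real" where
  "nu n j = (if j = 0 \<or> j = n then 1 / sqrt 2 else 1)"

definition Abar :: "nat \<Rightarrow> mat" where
  "Abar n = (\<lambda>k l. if k \<le> n \<and> l \<le> n then
      (if k = l then (if k = 0 \<or> k = n then 1 else 2)
       else if k = l + 1 \<or> l = k + 1 then -1 else 0) else 0)"

definition Dbar :: "nat \<Rightarrow> mat" where
  "Dbar n = (\<lambda>k l. if k \<le> n \<and> l \<le> n then
      (if k = l then (if k = 0 \<or> k = n then 2 else 4)
       else if k = l + 1 \<or> l = k + 1 then 1 else 0) else 0)"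

definition Bbar :: "nat \<Rightarrow> mat" where
  "Bbar n = (\<lambda>k l. if k < n \<and> l \<le> n then
      (if l = k then -1 else if l = k + 1 then 1 else 0) else 0)"

definition sbar :: "nat \<Rightarrow> nat \<Rightarrow> nat \<Rightarrow> real" where
  "sbar n j = (\<lambda>m. if m < n then nu n j * sin (real (2 * m + 1) * real j * pi / (2 * real n)) else 0)"

definition ctil :: "nat \<Rightarrow> nat \<Rightarrow> nat \<Rightarrow> real" where
  "ctil n j = (\<lambda>m. if m \<le> n then nu n j * cos (real m * real j * pi / real n) else 0)"

definition is_eigensol :: "nat \<Rightarrow> real \<Rightarrow> mat \<Rightarrow> mat \<Rightarrow> bool" where
  "is_eigensol n lam U V \<longleftrightarrow>
     (let h = 1 / real n; A = Abar n; B = Bbar n; D = Dbar n in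
      meq n (n + 1)
        (\<lambda>i j. mmul (n + 1) U A i j - mmul n (mmul (n + 1) B V) B i j)
        (\<lambda>i j. h\<^sup>2 / 6 * lam * mmul (n + 1) U D i j) \<and>
      meq (n + 1) n
        (\<lambda>i j. - mmul (n + 1) (mmul n (mtr B) U) (mtr B) i j + mmul (n + 1) A V i j)
        (\<lambda>i j. h\<^sup>2 / 6 * lam * mmul (n + 1) D V i j) \<and>
      (mnz n (n + 1) U \<or> mnz (n + 1) n V))"

definition div_free :: "nat \<Rightarrow> mat \<Rightarrow> mat \<Rightarrow> bool" where
  "div_free n U V \<longleftrightarrow>
     meq (n + 1) (n + 1)
       (\<lambda>i j. mmul (n + 1) (mmul n (mtr (Bbar n)) U) (Dbar n) i j
             + mmul n (mmul (n + 1) (Dbar n) V) (Bbar n) i j)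
       (\<lambda>i j. 0)"

definition lam1 :: "nat \<Rightarrow> nat \<Rightarrow> nat \<Rightarrow> real" where
  "lam1 n i j = 6 / (1 / real n)\<^sup>2 * ((tau n i)\<^sup>2 / sigma n i + (tau n j)\<^sup>2 / sigma n j)"

definition U1 :: "nat \<Rightarrow> nat \<Rightarrow> nat \<Rightarrow> mat" where
  "U1 n i j = (\<lambda>a b. tau n j * sigma n i * outer (sbar n i) (ctil n j) a b)"

definition V1 :: "nat \<Rightarrow> nat \<Rightarrow> nat \<Rightarrow> mat" where
  "V1 n i j = (\<lambda>a b. - tau n i * sigma n j * outer (ctil n i) (sbar n j) a b)"

definition U0 :: "nat \<Rightarrow> nat \<Rightarrow> nat \<Rightarrow> mat" where
  "U0 n i j = (\<lambda>a b. tau n i * outer (sbar n i) (ctil n j) a b)"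

definition V0 :: "nat \<Rightarrow> nat \<Rightarrow> nat \<Rightarrow> mat" where
  "V0 n i j = (\<lambda>a b. tau n j * outer (ctil n i) (sbar n j) a b)"

definition I1 :: "nat \<Rightarrow> (nat \<times> nat) set" where
  "I1 n = {1..n} \<times> {1..n}"

definition I0 :: "nat \<Rightarrow> (nat \<times> nat) set" where
  "I0 n = {0..n} \<times> {0..n} - {(0, 0)}"

end

theory Submission
  imports Defs
begin

text \<open>Both families are separable, \<open>U = \<alpha> sbar\<^sub>i ctil\<^sub>j\<^sup>T\<close> and
  \<open>V = \<beta> ctil\<^sub>i sbar\<^sub>j\<^sup>T\<close>. The modes satisfy \<open>Bbar ctil\<^sub>j = \<tau>\<^sub>j sbar\<^sub>j\<close>,
  \<open>Abar ctil\<^sub>j = \<tau>\<^sub>j Bbar\<^sup>T sbar\<^sub>j\<close> and \<open>\<sigma>\<^sub>j Bbar\<^sup>T sbar\<^sub>j = \<tau>\<^sub>j Dbar ctil\<^sub>j\<close>, so each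
  matrix equation collapses to a scalar equation in \<open>\<alpha>, \<beta>, \<lambda>\<close>, and so does the divergence
  constraint.
  For completeness: \<open>sbar\<^sub>1, \<dots>, sbar\<^sub>n\<close> and \<open>ctil\<^sub>0, \<dots>, ctil\<^sub>n\<close> are orthogonal bases (the
  latter for the trapezoidal weights \<open>\<nu>\<^sup>2\<close>), i.e. discrete sine and cosine transforms, so the
  products \<open>sbar\<^sub>i ctil\<^sub>j\<^sup>T\<close> and \<open>ctil\<^sub>i sbar\<^sub>j\<^sup>T\<close> are bases of the two matrix spaces. In these
  coordinates the family is block diagonal: a \<open>2 \<times> 2\<close> block of determinant
  \<open>\<tau>\<^sub>j\<^sup>2 \<sigma>\<^sub>i + \<tau>\<^sub>i\<^sup>2 \<sigma>\<^sub>j > 0\<close> for \<open>i, j \<ge> 1\<close>, and the nonzero scalar \<open>\<tau>\<^sub>i\<close> or \<open>\<tau>\<^sub>j\<close>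
  when the other index is \<open>0\<close>.\<close>

section \<open>Discrete trigonometric sums\<close>

lemma sum_cos_arith_telescope:
  fixes a y :: real
  shows "2 * sin y * (\<Sum>k<N. cos (a + 2 * real k * y))
    = sin (a + (2 * real N - 1) * y) - sin (a - y)"
proof (induction N)
  case (Suc N)
  define x where "x = a + 2 * real N * y"
  have "2 * sin y * cos x = sin (x + y) - sin (x - y)"
    using sin_times_cos[of y x] sin_minus[of "x - y"] by (simp add: add.commute)
  moreover have "x + y = a + (2 * real (Suc N) - 1) * y" "x - y = a + (2 * real N - 1) * y"
    by (simp_all add: x_def algebra_simps)
  ultimately show ?case
    using Suc by (simp add: distrib_left flip: x_def)
qed simp

lemma sum_cos_odd_multiples:
  fixes t :: real
  assumes "sin t \<noteq> 0"
  shows "(\<Sum>r<N. cos ((2 * real r + 1) * t)) = sin (2 * real N * t) / (2 * sin t)"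
  using sum_cos_arith_telescope[of t t N] assms by (simp add: field_simps)

lemma sum_cos_even_multiples:
  fixes t :: real
  assumes "sin t \<noteq> 0"
  shows "(\<Sum>m<N. cos (2 * real m * t)) = (sin ((2 * real N - 1) * t) + sin t) / (2 * sin t)"
  using sum_cos_arith_telescope[of t 0 N] assms by (simp add: field_simps)

lemma not_dvd_if_abs_less:
  fixes z :: int
  assumes "z \<noteq> 0" and "\<bar>z\<bar> < d"
  shows "\<not> d dvd z"
proof
  assume "d dvd z"
  with assms(1) have "\<bar>d\<bar> \<le> \<bar>z\<bar>" by (rule dvd_imp_le_int)
  then show False using assms(2) by linarith
qed

lemma double_dvd_diff_iff:
  assumes "0 < n" "p \<le> n" "q \<le> n"
  shows "int (2 * n) dvd (int p - int q) \<longleftrightarrow> p = q"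
proof
  assume dvd: "int (2 * n) dvd (int p - int q)"
  have "\<bar>int p - int q\<bar> < int (2 * n)"
    using assms by (auto simp: abs_if)
  with dvd have "int p - int q = 0"
    using not_dvd_if_abs_less by blast
  then show "p = q" by simp
qed simp

lemma double_dvd_sum_iff:
  assumes "p \<le> n" "q \<le> n"
  shows "int (2 * n) dvd int (p + q) \<longleftrightarrow> p = q \<and> (p = 0 \<or> p = n)"
proof
  assume dvd: "int (2 * n) dvd int (p + q)"
  have "\<not> (0 < p + q \<and> p + q < 2 * n)"
  proof
    assume "0 < p + q \<and> p + q < 2 * n"
    then have "\<not> int (2 * n) dvd int (p + q)"
      by (intro not_dvd_if_abs_less) auto
    with dvd show False by contradiction
  qed
  then show "p = q \<and> (p = 0 \<or> p = n)" using assms by auto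
qed auto

lemma sin_pi_fraction_nonzero:
  assumes "0 < n" and "\<not> int (2 * n) dvd z"
  shows "sin (of_int z * pi / (2 * real n)) \<noteq> 0"
proof
  assume "sin (of_int z * pi / (2 * real n)) = 0"
  then obtain i :: int where "of_int z * pi / (2 * real n) = of_int i * pi"
    by (auto simp: sin_zero_iff_int2)
  then have "(of_int z :: real) = of_int (int (2 * n) * i)"
    using assms(1) by (simp add: field_simps)
  then show False
    using assms(2) by (metis dvd_triv_left of_int_eq_iff)
qed

lemma sum_cos_odd_multiples_pi:
  assumes "0 < n" and "\<not> int (2 * n) dvd z"
  shows "(\<Sum>r<n. cos ((2 * real r + 1) * (of_int z * pi / (2 * real n)))) = 0"
proof -
  have "sin (2 * real n * (of_int z * pi / (2 * real n))) = 0"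
    using assms(1) by (simp add: mult.commute)
  then show ?thesis
    using sum_cos_odd_multiples[OF sin_pi_fraction_nonzero[OF assms]] by simp
qed

lemma sum_cos_odd_multiples_2n:
  assumes "0 < n"
  shows "(\<Sum>r<n. cos ((2 * real r + 1) * (of_int (int (2 * n)) * pi / (2 * real n)))) = - real n"
proof -
  have "cos ((2 * real r + 1) * (of_int (int (2 * n)) * pi / (2 * real n))) = -1" for r
  proof -
    have "(2 * real r + 1) * (of_int (int (2 * n)) * pi / (2 * real n)) = real (2 * r + 1) * pi"
      using assms by (simp add: field_simps)
    then show ?thesis by (simp only: cos_npi) simp
  qed
  then show ?thesis by (simp only:) simp
qed

lemma sum_nu_squared: "0 < n \<Longrightarrow> (\<Sum>m<n+1. (nu n m)\<^sup>2) = real n"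
  by (induction n) (auto simp: nu_def power_divide)

lemma weighted_sum_cos_pi:
  assumes n: "0 < n"
  shows "(\<Sum>m<n+1. (nu n m)\<^sup>2 * cos (real m * (of_int z * pi / real n)))
    = (if int (2 * n) dvd z then real n else 0)"
proof (cases "int (2 * n) dvd z")
  case True
  then obtain q where "z = int (2 * n) * q" by blast
  then have "cos (real m * (of_int z * pi / real n)) = 1" for m
    using n cos_int_2pin[of "int m * q"] by (simp add: field_simps)
  then show ?thesis using True sum_nu_squared[OF n] by simp
next
  case False
  define t where "t = of_int z * pi / (2 * real n)"
  have st: "sin t \<noteq> 0" unfolding t_def using sin_pi_fraction_nonzero[OF n False] .
  have arg: "real m * (of_int z * pi / real n) = 2 * real m * t" for m
    using n by (simp add: t_def)
  have zpi: "2 * real n * t = of_int z * pi"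
    using n by (simp add: t_def)
  have "sin (2 * real n * t) = 0"
    unfolding zpi by (metis mult.commute sin_npi_int)
  then have "sin ((2 * real n - 1) * t) = - cos (2 * real n * t) * sin t"
    by (simp add: left_diff_distrib sin_diff)
  then have "(\<Sum>m<n. cos (2 * real m * t)) = sin t * (1 - cos (2 * real n * t)) / (2 * sin t)"
    unfolding sum_cos_even_multiples[OF st] by (simp add: algebra_simps)
  then have "(\<Sum>m<n. cos (2 * real m * t)) = (1 - cos (2 * real n * t)) / 2"
    using st by simp
  moreover have "(\<Sum>m<n+1. (nu n m)\<^sup>2 * cos (2 * real m * t))
      = (\<Sum>m<n. cos (2 * real m * t)) - 1 / 2 + cos (2 * real n * t) / 2"
  proof -
    have "(\<Sum>m<n. (nu n m)\<^sup>2 * cos (2 * real m * t))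
        = (\<Sum>m<n. cos (2 * real m * t) - (if m = 0 then 1 / 2 else 0))"
      by (rule sum.cong) (auto simp: nu_def power_divide)
    then show ?thesis
      using n by (simp add: sum_subtractf nu_def power_divide)
  qed
  ultimately show ?thesis
    using False unfolding arg by simp
qed

section \<open>Orthogonality of the discrete modes\<close>

lemma nu_pos: "0 < nu n j"
  by (simp add: nu_def)

lemma sbar_zero [simp]: "sbar n 0 = (\<lambda>r. 0)"
  by (simp add: sbar_def fun_eq_iff)

lemma sbar_mult_sbar:
  assumes "r < n"
  shows "sbar n k r * sbar n i r
    = nu n k * nu n i / 2 * (cos ((2 * real r + 1) * (of_int (int k - int i) * pi / (2 * real n)))
                           - cos ((2 * real r + 1) * (of_int (int (k + i)) * pi / (2 * real n))))"
proof -
  let ?x = "(2 * real r + 1) * real k * pi / (2 * real n)"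
  let ?y = "(2 * real r + 1) * real i * pi / (2 * real n)"
  have "sbar n k r * sbar n i r = nu n k * nu n i * (sin ?x * sin ?y)"
    using assms by (simp add: sbar_def add.commute)
  also have "\<dots> = nu n k * nu n i / 2 * (cos (?x - ?y) - cos (?x + ?y))"
    by (simp add: sin_times_sin)
  also have "?x - ?y = (2 * real r + 1) * (of_int (int k - int i) * pi / (2 * real n))"
    by (simp add: diff_divide_distrib algebra_simps)
  also have "?x + ?y = (2 * real r + 1) * (of_int (int (k + i)) * pi / (2 * real n))"
    by (simp add: add_divide_distrib algebra_simps)
  finally show ?thesis .
qed

lemma sbar_orthogonal:
  assumes k: "1 \<le> k" "k \<le> n" and i: "1 \<le> i" "i \<le> n"
  shows "(\<Sum>r<n. sbar n k r * sbar n i r) = (if k = i then real n / 2 else 0)"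
proof -
  have n: "0 < n" using k by simp
  define S where "S z = (\<Sum>r<n. cos ((2 * real r + 1) * (of_int z * pi / (2 * real n))))" for z
  have "(\<Sum>r<n. sbar n k r * sbar n i r)
      = nu n k * nu n i / 2 * (S (int k - int i) - S (int (k + i)))"
    unfolding S_def right_diff_distrib sum_distrib_left sum_subtractf[symmetric]
    by (intro sum.cong) (simp_all add: sbar_mult_sbar right_diff_distrib)
  moreover have "S (int (k + i)) = (if k = i \<and> k = n then - real n else 0)"
  proof (cases "k = i \<and> k = n")
    case True
    then have "int (k + i) = int (2 * n)" by simp
    then have "S (int (k + i)) = - real n"
      unfolding S_def by (simp only: sum_cos_odd_multiples_2n[OF n])
    then show ?thesis using True by simp
  next
    case False
    then have "\<not> int (2 * n) dvd int (k + i)"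
      using k by (simp only: double_dvd_sum_iff[OF k(2) i(2)]) auto
    then have "S (int (k + i)) = 0"
      unfolding S_def by (rule sum_cos_odd_multiples_pi[OF n])
    then show ?thesis by (simp only: if_not_P[OF False])
  qed
  moreover have "S (int k - int i) = (if k = i then real n else 0)"
  proof (cases "k = i")
    case False
    then have "\<not> int (2 * n) dvd (int k - int i)"
      by (simp only: double_dvd_diff_iff[OF n k(2) i(2)]) simp
    then have "S (int k - int i) = 0"
      unfolding S_def by (rule sum_cos_odd_multiples_pi[OF n])
    then show ?thesis using False by simp
  qed (simp add: S_def)
  ultimately show ?thesis
    using k by (cases "k = i"; cases "k = n") (simp_all add: nu_def)
qed

lemma sbar_mult_sbar_same_mode:
  assumes "r < n" "r' < n"
  shows "sbar n i r * sbar n i r'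
    = (nu n i)\<^sup>2 / 2 * (cos (real i * (of_int (int r - int r') * pi / real n))
                        - cos (real i * (of_int (int (r + r' + 1)) * pi / real n)))"
proof -
  let ?x = "(2 * real r + 1) * real i * pi / (2 * real n)"
  let ?y = "(2 * real r' + 1) * real i * pi / (2 * real n)"
  have "sbar n i r * sbar n i r' = (nu n i)\<^sup>2 * (sin ?x * sin ?y)"
    using assms by (simp add: sbar_def power2_eq_square add.commute)
  also have "\<dots> = (nu n i)\<^sup>2 / 2 * (cos (?x - ?y) - cos (?x + ?y))"
    by (simp add: sin_times_sin)
  also have "?x - ?y = real i * (of_int (int r - int r') * pi / real n)"
    using assms by (simp add: field_simps)
  also have "?x + ?y = real i * (of_int (int (r + r' + 1)) * pi / real n)"
    using assms by (simp add: field_simps)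
  finally show ?thesis .
qed

lemma sbar_complete:
  assumes r: "r < n" "r' < n"
  shows "(\<Sum>i<n+1. sbar n i r * sbar n i r') = (if r = r' then real n / 2 else 0)"
proof -
  have n: "0 < n" using r by simp
  define W where "W z = (\<Sum>i<n+1. (nu n i)\<^sup>2 * cos (real i * (of_int z * pi / real n)))" for z
  have "(\<Sum>i<n+1. sbar n i r * sbar n i r') = 1 / 2 * (W (int r - int r') - W (int (r + r' + 1)))"
    unfolding W_def right_diff_distrib sum_distrib_left sum_subtractf[symmetric]
    by (intro sum.cong) (simp_all add: sbar_mult_sbar_same_mode[OF r] algebra_simps)
  moreover have "\<not> int (2 * n) dvd int (r + r' + 1)"
    using r by (intro not_dvd_if_abs_less) auto
  then have "W (int (r + r' + 1)) = 0"
    unfolding W_def weighted_sum_cos_pi[OF n] by (simp only: if_False)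
  moreover have "r \<le> n" "r' \<le> n" using r by simp_all
  then have "W (int r - int r') = (if r = r' then real n else 0)"
    unfolding W_def weighted_sum_cos_pi[OF n] by (simp only: double_dvd_diff_iff[OF n])
  ultimately show ?thesis by (cases "r = r'") (simp_all del: sum.lessThan_Suc)
qed

lemma cos_mult_cos_modes:
  assumes "0 < n"
  shows "cos (real m * real p * pi / real n) * cos (real m * real q * pi / real n)
    = (cos (real m * (of_int (int p - int q) * pi / real n))
       + cos (real m * (of_int (int (p + q)) * pi / real n))) / 2"
proof -
  let ?x = "real m * real p * pi / real n" and ?y = "real m * real q * pi / real n"
  have "?x - ?y = real m * (of_int (int p - int q) * pi / real n)"
       "?x + ?y = real m * (of_int (int (p + q)) * pi / real n)"
    using assms by (simp_all add: field_simps)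
  then show ?thesis
    by (simp only: cos_times_cos)
qed

lemma weighted_cos_product_sum:
  assumes n: "0 < n" and pq: "p \<le> n" "q \<le> n"
  shows "(\<Sum>m<n+1. (nu n m)\<^sup>2
            * (cos (real m * real p * pi / real n) * cos (real m * real q * pi / real n)))
    = (if p = q then real n / (2 * (nu n p)\<^sup>2) else 0)"
proof -
  define W where "W z = (\<Sum>m<n+1. (nu n m)\<^sup>2 * cos (real m * (of_int z * pi / real n)))" for z
  have "(\<Sum>m<n+1. (nu n m)\<^sup>2
            * (cos (real m * real p * pi / real n) * cos (real m * real q * pi / real n)))
      = 1 / 2 * (W (int p - int q) + W (int (p + q)))"
    unfolding W_def cos_mult_cos_modes[OF n] distrib_left sum_distrib_left sum.distrib[symmetric]
    by (intro sum.cong) (simp_all add: algebra_simps)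
  also have "W (int p - int q) = (if p = q then real n else 0)"
    unfolding W_def weighted_sum_cos_pi[OF n] double_dvd_diff_iff[OF n pq] ..
  also have "W (int (p + q)) = (if p = q \<and> (p = 0 \<or> p = n) then real n else 0)"
    unfolding W_def weighted_sum_cos_pi[OF n] double_dvd_sum_iff[OF pq] ..
  also have "1 / 2 * ((if p = q then real n else 0)
                      + (if p = q \<and> (p = 0 \<or> p = n) then real n else 0))
      = (if p = q then real n / (2 * (nu n p)\<^sup>2) else 0)"
    using n by (auto simp: nu_def power_divide)
  finally show ?thesis .
qed

section \<open>Biorthogonal systems and their tensor products\<close>

definition biorthogonal ::
    "'i set \<Rightarrow> 'x set \<Rightarrow> ('i \<Rightarrow> 'x \<Rightarrow> real) \<Rightarrow> ('i \<Rightarrow> 'x \<Rightarrow> real) \<Rightarrow> bool" where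
  "biorthogonal I X f g \<longleftrightarrow> (\<forall>i\<in>I. \<forall>i'\<in>I. (\<Sum>x\<in>X. g i x * f i' x) = of_bool (i = i'))"

definition resolves_identity ::
    "'i set \<Rightarrow> 'x set \<Rightarrow> ('i \<Rightarrow> 'x \<Rightarrow> real) \<Rightarrow> ('i \<Rightarrow> 'x \<Rightarrow> real) \<Rightarrow> bool" where
  "resolves_identity I X f g \<longleftrightarrow> (\<forall>x\<in>X. \<forall>x'\<in>X. (\<Sum>i\<in>I. g i x * f i x') = of_bool (x = x'))"

definition tensor ::
    "('i \<Rightarrow> 'x \<Rightarrow> real) \<Rightarrow> ('j \<Rightarrow> 'y \<Rightarrow> real) \<Rightarrow> 'i \<times> 'j \<Rightarrow> 'x \<times> 'y \<Rightarrow> real" where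
  "tensor f f' p q = f (fst p) (fst q) * f' (snd p) (snd q)"

lemma sum_tensor:
  "(\<Sum>q\<in>X \<times> Y. tensor g g' p q * tensor f f' p' q)
    = (\<Sum>x\<in>X. g (fst p) x * f (fst p') x) * (\<Sum>y\<in>Y. g' (snd p) y * f' (snd p') y)"
  by (simp add: tensor_def sum.cartesian_product' sum_product algebra_simps)

lemma biorthogonal_tensor:
  assumes "biorthogonal I X f g" and "biorthogonal J Y f' g'"
  shows "biorthogonal (I \<times> J) (X \<times> Y) (tensor f f') (tensor g g')"
  using assms unfolding biorthogonal_def by (auto simp: sum_tensor prod_eq_iff)

lemma resolves_identity_tensor:
  assumes "resolves_identity I X f g" and "resolves_identity J Y f' g'"
  shows "resolves_identity (I \<times> J) (X \<times> Y) (tensor f f') (tensor g g')"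
proof -
  have "(\<Sum>p\<in>I \<times> J. tensor g g' p q * tensor f f' p q')
      = (\<Sum>i\<in>I. g i (fst q) * f i (fst q')) * (\<Sum>j\<in>J. g' j (snd q) * f' j (snd q'))" for q q'
    by (simp add: tensor_def sum.cartesian_product' sum_product algebra_simps)
  then show ?thesis
    using assms unfolding resolves_identity_def by (auto simp: prod_eq_iff)
qed

lemma biorthogonal_coefficients_zero:
  assumes bi: "biorthogonal I X f g" and "finite I"
    and zero: "\<forall>x\<in>X. (\<Sum>i'\<in>I. a i' * f i' x) = 0" and i: "i \<in> I"
  shows "a i = 0"
proof -
  have "a i = (\<Sum>i'\<in>I. a i' * of_bool (i = i'))"
    using assms(2) i by (simp add: sum.delta)
  also have "\<dots> = (\<Sum>i'\<in>I. a i' * (\<Sum>x\<in>X. g i x * f i' x))"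
    using bi i unfolding biorthogonal_def by simp
  also have "\<dots> = (\<Sum>x\<in>X. g i x * (\<Sum>i'\<in>I. a i' * f i' x))"
    by (simp add: sum_distrib_left algebra_simps sum.swap[of _ I])
  also have "\<dots> = 0"
    using zero by simp
  finally show ?thesis .
qed

lemma resolves_identity_expansion:
  assumes res: "resolves_identity I X f g" and "finite X" and x: "x \<in> X"
  shows "h x = (\<Sum>i\<in>I. (\<Sum>y\<in>X. h y * g i y) * f i x)"
proof -
  have "(\<Sum>i\<in>I. (\<Sum>y\<in>X. h y * g i y) * f i x) = (\<Sum>y\<in>X. h y * (\<Sum>i\<in>I. g i y * f i x))"
    by (simp add: sum_distrib_left sum_distrib_right algebra_simps sum.swap[of _ I])
  also have "\<dots> = (\<Sum>y\<in>X. h y * of_bool (y = x))"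
    using res x unfolding resolves_identity_def by simp
  also have "\<dots> = h x"
    using assms(2) x by (simp add: sum.delta')
  finally show ?thesis ..
qed

lemma sbar_biorthogonal: "biorthogonal {1..n} {..<n} (sbar n) (\<lambda>i r. 2 / real n * sbar n i r)"
  unfolding biorthogonal_def
proof (intro ballI)
  fix i i' assume "i \<in> {1..n}" "i' \<in> {1..n}"
  then have "(\<Sum>r<n. sbar n i r * sbar n i' r) = real n / 2 * of_bool (i = i')" and "0 < n"
    by (auto simp: sbar_orthogonal)
  then show "(\<Sum>r<n. 2 / real n * sbar n i r * sbar n i' r) = of_bool (i = i')"
    by (simp only: mult.assoc flip: sum_distrib_left) simp
qed

lemma sbar_resolves_identity:
  "resolves_identity {1..n} {..<n} (sbar n) (\<lambda>i r. 2 / real n * sbar n i r)"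
  unfolding resolves_identity_def
proof (intro ballI)
  fix r r' assume "r \<in> {..<n}" "r' \<in> {..<n}"
  moreover have "{..<n+1} = insert 0 {1..n}" by auto
  ultimately have "(\<Sum>i\<in>{1..n}. sbar n i r * sbar n i r') = real n / 2 * of_bool (r = r')"
    and "0 < n"
    using sbar_complete[of r n r'] by auto
  then show "(\<Sum>i\<in>{1..n}. 2 / real n * sbar n i r * sbar n i r') = of_bool (r = r')"
    by (simp only: mult.assoc flip: sum_distrib_left) simp
qed

lemma ctil_biorthogonal:
  assumes n: "0 < n"
  shows "biorthogonal {0..n} {..<n+1} (ctil n) (\<lambda>j c. 2 / real n * (nu n c)\<^sup>2 * ctil n j c)"
  unfolding biorthogonal_def
proof (intro ballI)
  fix l j assume "l \<in> {0..n}" "j \<in> {0..n}"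
  then have lj: "l \<le> n" "j \<le> n" by auto
  have "(\<Sum>c<n+1. (nu n c)\<^sup>2 * ctil n l c * ctil n j c)
      = nu n l * nu n j * (\<Sum>c<n+1. (nu n c)\<^sup>2
          * (cos (real c * real l * pi / real n) * cos (real c * real j * pi / real n)))"
    unfolding sum_distrib_left by (intro sum.cong) (auto simp: ctil_def)
  also have "\<dots> = real n / 2 * of_bool (l = j)"
    using lj n nu_pos[of n j] by (simp only: weighted_cos_product_sum) (auto simp: power2_eq_square)
  finally show "(\<Sum>c<n+1. 2 / real n * (nu n c)\<^sup>2 * ctil n l c * ctil n j c) = of_bool (l = j)"
    using n by (simp only: mult.assoc flip: sum_distrib_left) simp
qed

lemma ctil_resolves_identity:
  assumes n: "0 < n"
  shows "resolves_identity {0..n} {..<n+1} (ctil n) (\<lambda>j c. 2 / real n * (nu n c)\<^sup>2 * ctil n j c)"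
  unfolding resolves_identity_def
proof (intro ballI)
  fix c c' assume "c \<in> {..<n+1}" "c' \<in> {..<n+1}"
  then have cc: "c \<le> n" "c' \<le> n" by auto
  have "{0..n} = {..<n+1}" by auto
  then have "(\<Sum>j\<in>{0..n}. (nu n c)\<^sup>2 * ctil n j c * ctil n j c')
      = (nu n c)\<^sup>2 * (\<Sum>j<n+1. (nu n j)\<^sup>2
          * (cos (real j * real c * pi / real n) * cos (real j * real c' * pi / real n)))"
    unfolding sum_distrib_left using cc
    by (intro sum.cong) (auto simp: ctil_def power2_eq_square ac_simps)
  also have "\<dots> = real n / 2 * of_bool (c = c')"
    using cc n by (simp only: weighted_cos_product_sum) (auto simp: nu_def power_divide)
  finally show "(\<Sum>j\<in>{0..n}. 2 / real n * (nu n c)\<^sup>2 * ctil n j c * ctil n j c') = of_bool (c = c')"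
    using n by (simp only: mult.assoc flip: sum_distrib_left) simp
qed

lemma sbar_ctil_basis_independent:
  assumes "0 < n"
    and "\<forall>r<n. \<forall>c<n+1. (\<Sum>p\<in>{1..n} \<times> {0..n}. \<alpha> p * tensor (sbar n) (ctil n) p (r, c)) = 0"
  shows "\<forall>p\<in>{1..n} \<times> {0..n}. \<alpha> p = 0"
proof -
  have "\<forall>x\<in>{..<n} \<times> {..<n+1}. (\<Sum>p\<in>{1..n} \<times> {0..n}. \<alpha> p * tensor (sbar n) (ctil n) p x) = 0"
    using assms(2) by auto
  then show ?thesis
    using assms(1)
      biorthogonal_coefficients_zero[OF biorthogonal_tensor[OF sbar_biorthogonal ctil_biorthogonal]]
    by blast
qed

lemma ctil_sbar_basis_independent:
  assumes "0 < n"
    and "\<forall>r<n+1. \<forall>c<n. (\<Sum>p\<in>{0..n} \<times> {1..n}. \<alpha> p * tensor (ctil n) (sbar n) p (r, c)) = 0"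
  shows "\<forall>p\<in>{0..n} \<times> {1..n}. \<alpha> p = 0"
proof -
  have "\<forall>x\<in>{..<n+1} \<times> {..<n}. (\<Sum>p\<in>{0..n} \<times> {1..n}. \<alpha> p * tensor (ctil n) (sbar n) p x) = 0"
    using assms(2) by auto
  then show ?thesis
    using assms(1)
      biorthogonal_coefficients_zero[OF biorthogonal_tensor[OF ctil_biorthogonal sbar_biorthogonal]]
    by blast
qed

lemma sbar_ctil_basis_spans:
  assumes "0 < n"
  shows "\<exists>\<alpha>. \<forall>r<n. \<forall>c<n+1. X r c = (\<Sum>p\<in>{1..n} \<times> {0..n}. \<alpha> p * tensor (sbar n) (ctil n) p (r, c))"
proof -
  obtain g
    where g: "resolves_identity ({1..n} \<times> {0..n}) ({..<n} \<times> {..<n+1}) (tensor (sbar n) (ctil n)) g"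
    using resolves_identity_tensor[OF sbar_resolves_identity ctil_resolves_identity[OF assms]]
    by blast
  show ?thesis
    using resolves_identity_expansion[OF g, where h = "\<lambda>x. X (fst x) (snd x)"] by auto
qed

lemma ctil_sbar_basis_spans:
  assumes "0 < n"
  shows "\<exists>\<alpha>. \<forall>r<n+1. \<forall>c<n. Y r c = (\<Sum>p\<in>{0..n} \<times> {1..n}. \<alpha> p * tensor (ctil n) (sbar n) p (r, c))"
proof -
  obtain g
    where g: "resolves_identity ({0..n} \<times> {1..n}) ({..<n+1} \<times> {..<n}) (tensor (ctil n) (sbar n)) g"
    using resolves_identity_tensor[OF ctil_resolves_identity[OF assms] sbar_resolves_identity]
    by blast
  show ?thesis
    using resolves_identity_expansion[OF g, where h = "\<lambda>x. Y (fst x) (snd x)"] by auto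
qed

section \<open>The modes under the tridiagonal matrices\<close>

lemma sigma_pos: "0 < sigma n j"
  unfolding sigma_def by (smt (verit) cos_ge_minus_one)

definition ctil_ext :: "nat \<Rightarrow> nat \<Rightarrow> real \<Rightarrow> real" where
  "ctil_ext n j x = nu n j * cos (x * real j * pi / real n)"

definition sbar_ext :: "nat \<Rightarrow> nat \<Rightarrow> real \<Rightarrow> real" where
  "sbar_ext n j x = nu n j * sin ((2 * x + 1) * real j * pi / (2 * real n))"

lemma ctil_eq_ext: "m \<le> n \<Longrightarrow> ctil n j m = ctil_ext n j (real m)"
  by (simp add: ctil_def ctil_ext_def)

lemma sbar_eq_ext: "m < n \<Longrightarrow> sbar n j m = sbar_ext n j (real m)"
  by (simp add: sbar_def sbar_ext_def add.commute)

lemma ctil_ext_diff: "ctil_ext n j (x + 1) - ctil_ext n j x = tau n j * sbar_ext n j x"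
proof -
  define t where "t = real j * pi / (2 * real n)"
  define u where "u = (2 * x + 1) * t"
  have "(x + 1) * real j * pi / real n = u + t" "x * real j * pi / real n = u - t"
    by (cases "n = 0"; simp add: u_def t_def field_simps)+
  moreover have "(2 * x + 1) * real j * pi / (2 * real n) = u"
    by (simp add: u_def t_def)
  ultimately show ?thesis
    by (simp add: ctil_ext_def sbar_ext_def tau_def cos_add cos_diff flip: t_def)
      (simp add: algebra_simps)
qed

lemma sbar_ext_diff: "sbar_ext n j (x - 1) - sbar_ext n j x = tau n j * ctil_ext n j x"
proof -
  define t where "t = real j * pi / (2 * real n)"
  define u where "u = x * real j * pi / real n"
  have "(2 * (x - 1) + 1) * real j * pi / (2 * real n) = u - t"
       "(2 * x + 1) * real j * pi / (2 * real n) = u + t"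
    by (cases "n = 0"; simp add: u_def t_def field_simps)+
  then show ?thesis
    by (simp add: ctil_ext_def sbar_ext_def tau_def sin_add sin_diff flip: t_def u_def)
      (simp add: algebra_simps)
qed

lemma ctil_ext_second_diff:
  "ctil_ext n j (x - 1) + 4 * ctil_ext n j x + ctil_ext n j (x + 1) = sigma n j * ctil_ext n j x"
proof -
  define t where "t = real j * pi / real n"
  define u where "u = x * real j * pi / real n"
  have "(x - 1) * real j * pi / real n = u - t" "(x + 1) * real j * pi / real n = u + t"
    by (cases "n = 0"; simp add: u_def t_def field_simps)+
  then show ?thesis
    by (simp add: ctil_ext_def sigma_def cos_add cos_diff flip: t_def u_def)
      (simp add: algebra_simps)
qed

lemma sbar_ext_reflect_left: "sbar_ext n j (-1) = - sbar_ext n j 0"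
  by (simp add: sbar_ext_def)

lemma ctil_ext_reflect_left: "ctil_ext n j (-1) = ctil_ext n j 1"
  by (simp add: ctil_ext_def)

lemma sbar_ext_reflect_right: "0 < n \<Longrightarrow> sbar_ext n j (real n) = - sbar_ext n j (real n - 1)"
proof -
  assume n: "0 < n"
  define t where "t = real j * pi / (2 * real n)"
  have "(2 * real n + 1) * real j * pi / (2 * real n) = real j * pi + t"
       "(2 * (real n - 1) + 1) * real j * pi / (2 * real n) = real j * pi - t"
    using n by (simp_all add: t_def field_simps)
  then show ?thesis
    by (simp add: sbar_ext_def sin_add sin_diff)
qed

lemma ctil_ext_reflect_right: "0 < n \<Longrightarrow> ctil_ext n j (real n + 1) = ctil_ext n j (real n - 1)"
proof -
  assume n: "0 < n"
  define t where "t = real j * pi / real n"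
  have "(real n + 1) * real j * pi / real n = real j * pi + t"
       "(real n - 1) * real j * pi / real n = real j * pi - t"
    using n by (simp_all add: t_def field_simps)
  then show ?thesis
    by (simp add: ctil_ext_def cos_add cos_diff)
qed

lemma sum_mult_delta:
  fixes f :: "nat \<Rightarrow> real"
  assumes "p < N"
  shows "(\<Sum>l<N. f l * of_bool (l = p)) = f p"
proof -
  have "{..<N} \<inter> {l. l = p} = {p}" using assms by auto
  then show ?thesis by simp
qed

lemma Bbar_row_sum:
  fixes f :: "nat \<Rightarrow> real"
  assumes "k < n"
  shows "(\<Sum>l<n+1. Bbar n k l * f l) = f (k + 1) - f k"
proof -
  have "(\<Sum>l<n+1. Bbar n k l * f l) = (\<Sum>l<n+1. f l * of_bool (l = k + 1) - f l * of_bool (l = k))"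
    using assms by (intro sum.cong) (auto simp: Bbar_def)
  also have "\<dots> = f (k + 1) - f k"
    using assms by (simp only: sum_subtractf sum_mult_delta)
  finally show ?thesis .
qed

text \<open>Column sums are split into the contributions of the two mesh cells next to node \<open>m\<close> (only
  one of them at a boundary node): \<open>Abar\<close> and \<open>Dbar\<close> are assembled from the cell matrices
  \<open>[[1, -1], [-1, 1]]\<close> and \<open>[[2, 1], [1, 2]]\<close>.\<close>

lemma Bbar_column_sum:
  fixes f :: "nat \<Rightarrow> real"
  assumes "m \<le> n"
  shows "(\<Sum>k<n. f k * Bbar n k m) = of_bool (1 \<le> m) * f (m - 1) - of_bool (m < n) * f m"
proof -
  have "(\<Sum>k<n. f k * Bbar n k m)
      = of_bool (1 \<le> m) * (\<Sum>k<n. f k * of_bool (k = m - 1))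
        - of_bool (m < n) * (\<Sum>k<n. f k * of_bool (k = m))"
    unfolding sum_distrib_left sum_subtractf[symmetric]
    using assms by (intro sum.cong) (auto simp: Bbar_def)
  also have "\<dots> = of_bool (1 \<le> m) * f (m - 1) - of_bool (m < n) * f m"
    using assms by (cases "1 \<le> m"; cases "m < n") (simp_all add: sum_mult_delta)
  finally show ?thesis .
qed

lemma Abar_column_sum:
  fixes f :: "nat \<Rightarrow> real"
  assumes "1 \<le> n" "m \<le> n"
  shows "(\<Sum>l<n+1. f l * Abar n l m)
    = of_bool (1 \<le> m) * (f m - f (m - 1)) + of_bool (m < n) * (f m - f (m + 1))"
proof -
  have "(\<Sum>l<n+1. f l * Abar n l m)
      = (\<Sum>l<n+1. of_bool (1 \<le> m) * (f l * of_bool (l = m) - f l * of_bool (l = m - 1))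
                 + of_bool (m < n) * (f l * of_bool (l = m) - f l * of_bool (l = m + 1)))"
    using assms by (intro sum.cong) (auto simp: Abar_def)
  also have "\<dots> = of_bool (1 \<le> m) * (f m - f (m - 1)) + of_bool (m < n) * (f m - f (m + 1))"
    using assms
    by (simp only: sum.distrib sum_subtractf flip: sum_distrib_left) (auto simp: sum_mult_delta)
  finally show ?thesis .
qed

lemma Dbar_column_sum:
  fixes f :: "nat \<Rightarrow> real"
  assumes "1 \<le> n" "m \<le> n"
  shows "(\<Sum>l<n+1. f l * Dbar n l m)
    = of_bool (1 \<le> m) * (2 * f m + f (m - 1)) + of_bool (m < n) * (2 * f m + f (m + 1))"
proof -
  have "(\<Sum>l<n+1. f l * Dbar n l m)
      = (\<Sum>l<n+1. of_bool (1 \<le> m) * (2 * (f l * of_bool (l = m)) + f l * of_bool (l = m - 1))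
                 + of_bool (m < n) * (2 * (f l * of_bool (l = m)) + f l * of_bool (l = m + 1)))"
    using assms by (intro sum.cong) (auto simp: Dbar_def)
  also have "\<dots> = of_bool (1 \<le> m) * (2 * f m + f (m - 1)) + of_bool (m < n) * (2 * f m + f (m + 1))"
    using assms by (simp only: sum.distrib flip: sum_distrib_left) (auto simp: sum_mult_delta)
  finally show ?thesis .
qed

lemma Abar_sym: "Abar n l m = Abar n m l"
  by (auto simp: Abar_def)

lemma Dbar_sym: "Dbar n l m = Dbar n m l"
  by (auto simp: Dbar_def)

lemma ctil_succ_diff:
  assumes "k < n"
  shows "ctil n j (k + 1) - ctil n j k = tau n j * sbar n j k"
proof -
  have "real (k + 1) = real k + 1" by simp
  then show ?thesis
    using assms ctil_ext_diff[of n j "real k"] by (simp only: ctil_eq_ext sbar_eq_ext)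
qed

lemma Bbar_ctil: "k < n \<Longrightarrow> (\<Sum>l<n+1. Bbar n k l * ctil n j l) = tau n j * sbar n j k"
  unfolding Bbar_row_sum by (rule ctil_succ_diff)

lemma ctil_Abar:
  assumes "1 \<le> n" "m \<le> n"
  shows "(\<Sum>l<n+1. ctil n j l * Abar n l m) = tau n j * (\<Sum>k<n. sbar n j k * Bbar n k m)"
proof -
  have "1 \<le> m \<Longrightarrow> ctil n j m - ctil n j (m - 1) = tau n j * sbar n j (m - 1)"
    using ctil_succ_diff[of "m - 1" n j] assms by simp
  moreover have "m < n \<Longrightarrow> ctil n j m - ctil n j (m + 1) = - (tau n j * sbar n j m)"
    using ctil_succ_diff[of m n j] by simp
  ultimately show ?thesis
    unfolding Abar_column_sum[OF assms] Bbar_column_sum[OF assms(2)]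
    by (cases "1 \<le> m"; cases "m < n") (simp_all add: algebra_simps)
qed

text \<open>At an interior node this combines the two difference identities of the extended modes. At a
  boundary node only one cell contributes, and the reflection symmetries of the extended modes
  across the boundary show that the result is exactly half of the interior identity.\<close>

lemma sbar_Bbar:
  assumes n: "1 \<le> n" and m: "m \<le> n"
  shows "(\<Sum>k<n. sbar n j k * Bbar n k m) = tau n j / sigma n j * (\<Sum>l<n+1. ctil n j l * Dbar n l m)"
proof -
  let ?S = "sbar_ext n j" and ?C = "ctil_ext n j"
  have interior: "sigma n j * (?S (x - 1) - ?S x)
      = tau n j * (?C (x - 1) + 4 * ?C x + ?C (x + 1))" for x
    using sbar_ext_diff[of n j x] ctil_ext_second_diff[of n j x] by (simp add: algebra_simps)
  consider "m = 0" | "m = n" | "1 \<le> m" "m < n"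
    using m by linarith
  then have "sigma n j * (of_bool (1 \<le> m) * sbar n j (m - 1) - of_bool (m < n) * sbar n j m)
    = tau n j * (of_bool (1 \<le> m) * (2 * ctil n j m + ctil n j (m - 1))
                 + of_bool (m < n) * (2 * ctil n j m + ctil n j (m + 1)))"
  proof cases
    case 1
    have "2 * (sigma n j * (- ?S 0)) = 2 * (tau n j * (2 * ?C 0 + ?C 1))"
      using interior[of 0] sbar_ext_reflect_left[of n j] ctil_ext_reflect_left[of n j]
      by (simp add: algebra_simps)
    then show ?thesis
      using 1 n by (simp add: sbar_eq_ext ctil_eq_ext)
  next
    case 2
    have "2 * (sigma n j * ?S (real n - 1)) = 2 * (tau n j * (2 * ?C (real n) + ?C (real n - 1)))"
      using interior[of "real n"] sbar_ext_reflect_right[of n j] ctil_ext_reflect_right[of n j] n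
      by (simp add: algebra_simps)
    then show ?thesis
      using 2 n by (simp add: sbar_eq_ext ctil_eq_ext of_nat_diff)
  next
    case 3
    then show ?thesis
      using interior[of "real m"] n
      by (simp add: sbar_eq_ext ctil_eq_ext of_nat_diff algebra_simps)
  qed
  then show ?thesis
    unfolding Bbar_column_sum[OF m] Dbar_column_sum[OF n m]
    using sigma_pos[of n j] by (simp add: field_simps)
qed

section \<open>Separable eigen-solutions\<close>

lemma mmul_outer_left:
  "mmul k (\<lambda>r c. \<alpha> * outer x y r c) M = (\<lambda>r c. \<alpha> * outer x (\<lambda>c. \<Sum>l<k. y l * M l c) r c)"
  by (simp add: mmul_def outer_def fun_eq_iff sum_distrib_left ac_simps)

lemma mmul_outer_right:
  "mmul k M (\<lambda>r c. \<alpha> * outer x y r c) = (\<lambda>r c. \<alpha> * outer (\<lambda>r. \<Sum>l<k. M r l * x l) y r c)"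
  by (simp add: mmul_def outer_def fun_eq_iff sum_distrib_left sum_distrib_right ac_simps)

lemma tau_nonzero:
  assumes "1 \<le> i" "i \<le> n"
  shows "tau n i \<noteq> 0"
proof -
  have "0 < real i * pi / (2 * real n)" "real i * pi / (2 * real n) < pi"
    using assms by (auto simp: field_simps)
  then have "0 < sin (real i * pi / (2 * real n))"
    by (rule sin_gt_zero)
  then show ?thesis by (simp add: tau_def)
qed

lemma sbar_first_nonzero:
  assumes "1 \<le> i" "i \<le> n"
  shows "sbar n i 0 \<noteq> 0"
  using tau_nonzero[OF assms] nu_pos[of n i] assms by (simp add: sbar_def tau_def)

lemma ctil_first_nonzero: "ctil n j 0 \<noteq> 0"
  using nu_pos[of n j] by (simp add: ctil_def)

lemma separable_first_residual:
  fixes \<alpha> \<beta> :: real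
  assumes n: "1 \<le> n" and r: "r < n" and c: "c \<le> n"
  shows "mmul (n+1) (\<lambda>r c. \<alpha> * outer (sbar n i) (ctil n j) r c) (Abar n) r c
      - mmul n (mmul (n+1) (Bbar n) (\<lambda>r c. \<beta> * outer (ctil n i) (sbar n j) r c)) (Bbar n) r c
    = (\<alpha> * tau n j - \<beta> * tau n i) * tau n j / sigma n j
      * (sbar n i r * (\<Sum>l<n+1. ctil n j l * Dbar n l c))"
proof -
  have "mmul (n+1) (\<lambda>r c. \<alpha> * outer (sbar n i) (ctil n j) r c) (Abar n) r c
      - mmul n (mmul (n+1) (Bbar n) (\<lambda>r c. \<beta> * outer (ctil n i) (sbar n j) r c)) (Bbar n) r c
    = \<alpha> * sbar n i r * (\<Sum>l<n+1. ctil n j l * Abar n l c)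
      - \<beta> * (\<Sum>l<n+1. Bbar n r l * ctil n i l) * (\<Sum>k<n. sbar n j k * Bbar n k c)"
    unfolding mmul_outer_left mmul_outer_right by (simp add: outer_def del: sum.lessThan_Suc)
  also have "\<dots> = (\<alpha> * tau n j - \<beta> * tau n i) * sbar n i r * (\<Sum>k<n. sbar n j k * Bbar n k c)"
    by (simp only: ctil_Abar[OF n c] Bbar_ctil[OF r]) (simp add: algebra_simps)
  also have "\<dots> = (\<alpha> * tau n j - \<beta> * tau n i) * tau n j / sigma n j
      * (sbar n i r * (\<Sum>l<n+1. ctil n j l * Dbar n l c))"
    by (simp only: sbar_Bbar[OF n c]) (simp add: algebra_simps del: sum.lessThan_Suc)
  finally show ?thesis .
qed

lemma separable_second_residual:
  fixes \<alpha> \<beta> :: real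
  assumes n: "1 \<le> n" and r: "r \<le> n" and c: "c < n"
  shows "- mmul (n+1) (mmul n (mtr (Bbar n)) (\<lambda>r c. \<alpha> * outer (sbar n i) (ctil n j) r c))
          (mtr (Bbar n)) r c
      + mmul (n+1) (Abar n) (\<lambda>r c. \<beta> * outer (ctil n i) (sbar n j) r c) r c
    = (\<beta> * tau n i - \<alpha> * tau n j) * tau n i / sigma n i
      * ((\<Sum>l<n+1. ctil n i l * Dbar n l r) * sbar n j c)"
proof -
  have "- mmul (n+1) (mmul n (mtr (Bbar n)) (\<lambda>r c. \<alpha> * outer (sbar n i) (ctil n j) r c))
          (mtr (Bbar n)) r c
      + mmul (n+1) (Abar n) (\<lambda>r c. \<beta> * outer (ctil n i) (sbar n j) r c) r c
    = - \<alpha> * (\<Sum>k<n. sbar n i k * Bbar n k r) * (\<Sum>l<n+1. Bbar n c l * ctil n j l)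
      + \<beta> * (\<Sum>l<n+1. ctil n i l * Abar n l r) * sbar n j c"
    unfolding mmul_outer_left mmul_outer_right
    by (simp add: outer_def mtr_def Abar_sym[of n r] ac_simps del: sum.lessThan_Suc)
  also have "\<dots> = (\<beta> * tau n i - \<alpha> * tau n j) * (\<Sum>k<n. sbar n i k * Bbar n k r) * sbar n j c"
    by (simp only: ctil_Abar[OF n r] Bbar_ctil[OF c]) (simp add: algebra_simps)
  also have "\<dots> = (\<beta> * tau n i - \<alpha> * tau n j) * tau n i / sigma n i
      * ((\<Sum>l<n+1. ctil n i l * Dbar n l r) * sbar n j c)"
    by (simp only: sbar_Bbar[OF n r]) (simp add: algebra_simps del: sum.lessThan_Suc)
  finally show ?thesis .
qed

lemma separable_is_eigensol:
  fixes \<alpha> \<beta> \<mu> lam :: real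
  assumes n: "1 \<le> n"
    and eq_U: "(\<alpha> * tau n j - \<beta> * tau n i) * tau n j / sigma n j = \<mu> * \<alpha>"
    and eq_V: "(\<beta> * tau n i - \<alpha> * tau n j) * tau n i / sigma n i = \<mu> * \<beta>"
    and lam: "(1 / real n)\<^sup>2 / 6 * lam = \<mu>"
    and nonzero: "\<alpha> * sbar n i 0 \<noteq> 0 \<or> \<beta> * sbar n j 0 \<noteq> 0"
  shows "is_eigensol n lam (\<lambda>r c. \<alpha> * outer (sbar n i) (ctil n j) r c)
    (\<lambda>r c. \<beta> * outer (ctil n i) (sbar n j) r c)"
proof -
  let ?U = "\<lambda>r c. \<alpha> * outer (sbar n i) (ctil n j) r c"
  let ?V = "\<lambda>r c. \<beta> * outer (ctil n i) (sbar n j) r c"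
  have UD: "mmul (n+1) ?U (Dbar n) r c = \<alpha> * (sbar n i r * (\<Sum>l<n+1. ctil n j l * Dbar n l c))"
    for r c
    unfolding mmul_outer_left by (simp add: outer_def del: sum.lessThan_Suc)
  have DV: "mmul (n+1) (Dbar n) ?V r c = \<beta> * ((\<Sum>l<n+1. ctil n i l * Dbar n l r) * sbar n j c)"
    for r c
    unfolding mmul_outer_right
    by (simp add: outer_def Dbar_sym[of n r] ac_simps del: sum.lessThan_Suc)
  have "mmul (n+1) ?U (Abar n) r c - mmul n (mmul (n+1) (Bbar n) ?V) (Bbar n) r c
      = (1 / real n)\<^sup>2 / 6 * lam * mmul (n+1) ?U (Dbar n) r c" if r: "r < n" and "c < n + 1" for r c
  proof -
    have "c \<le> n" using that by simp
    then show ?thesis unfolding separable_first_residual[OF n r \<open>c \<le> n\<close>] eq_U lam UD by simp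
  qed
  moreover have "- mmul (n+1) (mmul n (mtr (Bbar n)) ?U) (mtr (Bbar n)) r c
      + mmul (n+1) (Abar n) ?V r c
      = (1 / real n)\<^sup>2 / 6 * lam * mmul (n+1) (Dbar n) ?V r c" if "r < n + 1" and c: "c < n" for r c
  proof -
    have "r \<le> n" using that by simp
    then show ?thesis unfolding separable_second_residual[OF n \<open>r \<le> n\<close> c] eq_V lam DV by simp
  qed
  moreover have "mnz n (n+1) ?U \<or> mnz (n+1) n ?V"
    using nonzero n ctil_first_nonzero[of n i] ctil_first_nonzero[of n j]
    unfolding mnz_def outer_def by fastforce
  ultimately show ?thesis
    unfolding is_eigensol_def Let_def meq_def by blast
qed

lemma separable_div_free:
  fixes \<alpha> \<beta> :: real
  assumes n: "1 \<le> n"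
    and eq: "\<alpha> * tau n i * sigma n j + \<beta> * sigma n i * tau n j = 0"
  shows "div_free n (\<lambda>r c. \<alpha> * outer (sbar n i) (ctil n j) r c)
    (\<lambda>r c. \<beta> * outer (ctil n i) (sbar n j) r c)"
proof -
  let ?U = "\<lambda>r c. \<alpha> * outer (sbar n i) (ctil n j) r c"
  let ?V = "\<lambda>r c. \<beta> * outer (ctil n i) (sbar n j) r c"
  let ?d = "\<lambda>q m. \<Sum>l<n+1. ctil n q l * Dbar n l m"
  have "mmul (n+1) (mmul n (mtr (Bbar n)) ?U) (Dbar n) r c
      + mmul n (mmul (n+1) (Dbar n) ?V) (Bbar n) r c = 0" if "r < n + 1" "c < n + 1" for r c
  proof -
    have r: "r \<le> n" and c: "c \<le> n" using that by simp_all
    have "mmul (n+1) (mmul n (mtr (Bbar n)) ?U) (Dbar n) r c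
        + mmul n (mmul (n+1) (Dbar n) ?V) (Bbar n) r c
      = \<alpha> * (\<Sum>k<n. sbar n i k * Bbar n k r) * ?d j c + \<beta> * ?d i r * (\<Sum>k<n. sbar n j k * Bbar n k c)"
      unfolding mmul_outer_left mmul_outer_right
      by (simp add: outer_def mtr_def Dbar_sym[of n r] ac_simps del: sum.lessThan_Suc)
    also have "\<dots> = (\<alpha> * tau n i * sigma n j + \<beta> * sigma n i * tau n j) * (?d i r * ?d j c)
        / (sigma n i * sigma n j)"
      unfolding sbar_Bbar[OF n r] sbar_Bbar[OF n c] using sigma_pos[of n i] sigma_pos[of n j]
      by (simp add: field_simps)
    finally show ?thesis
      using eq by simp
  qed
  then show ?thesis
    unfolding div_free_def meq_def by blast
qed

lemma divergence_free_eigensol: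
  assumes n: "1 \<le> n" and ij: "(i, j) \<in> I1 n"
  shows "is_eigensol n (lam1 n i j) (U1 n i j) (V1 n i j) \<and> div_free n (U1 n i j) (V1 n i j)"
proof -
  have "0 < n" using n by simp
  have i: "1 \<le> i" "i \<le> n" and j: "1 \<le> j" "j \<le> n" using ij by (auto simp: I1_def)
  have si: "0 < sigma n i" and sj: "0 < sigma n j" by (rule sigma_pos)+
  define \<mu> where "\<mu> = (tau n i)\<^sup>2 / sigma n i + (tau n j)\<^sup>2 / sigma n j"
  have "is_eigensol n (lam1 n i j) (U1 n i j) (V1 n i j)"
    unfolding U1_def V1_def
  proof (rule separable_is_eigensol[where \<mu> = \<mu>])
    show "(tau n j * sigma n i * tau n j - - tau n i * sigma n j * tau n i) * tau n j / sigma n j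
        = \<mu> * (tau n j * sigma n i)"
      using si sj by (simp add: \<mu>_def field_simps power2_eq_square)
    show "(- tau n i * sigma n j * tau n i - tau n j * sigma n i * tau n j) * tau n i / sigma n i
        = \<mu> * (- tau n i * sigma n j)"
      using si sj by (simp add: \<mu>_def field_simps power2_eq_square)
    show "(1 / real n)\<^sup>2 / 6 * lam1 n i j = \<mu>"
      using \<open>0 < n\<close> by (simp add: lam1_def \<mu>_def mult.commute)
    show "tau n j * sigma n i * sbar n i 0 \<noteq> 0 \<or> - tau n i * sigma n j * sbar n j 0 \<noteq> 0"
      using tau_nonzero[OF j] sbar_first_nonzero[OF i] si by simp
  qed (use n i j in auto)
  moreover have "div_free n (U1 n i j) (V1 n i j)"
    unfolding U1_def V1_def by (rule separable_div_free[OF n]) (simp add: algebra_simps)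
  ultimately show ?thesis ..
qed

lemma gradient_eigensol:
  assumes n: "1 \<le> n" and "(i, j) \<in> I0 n"
  shows "is_eigensol n 0 (U0 n i j) (V0 n i j)"
  unfolding U0_def V0_def
proof (rule separable_is_eigensol[where \<mu> = 0])
  have ij: "i \<le> n" "j \<le> n" "(i, j) \<noteq> (0, 0)" using assms(2) by (auto simp: I0_def)
  show "tau n i * sbar n i 0 \<noteq> 0 \<or> tau n j * sbar n j 0 \<noteq> 0"
  proof (cases "i = 0")
    case True
    then have "1 \<le> j" using ij by simp
    then show ?thesis using tau_nonzero sbar_first_nonzero ij by simp
  next
    case False
    then have "1 \<le> i" by simp
    then show ?thesis using tau_nonzero sbar_first_nonzero ij by simp
  qed
qed (use n assms(2) in \<open>auto simp: I0_def\<close>)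

section \<open>Completeness\<close>

definition U_coeff :: "nat \<Rightarrow> (nat \<times> nat \<Rightarrow> real) \<Rightarrow> (nat \<times> nat \<Rightarrow> real) \<Rightarrow> nat \<times> nat \<Rightarrow> real" where
  "U_coeff n a b p
    = of_bool (p \<in> I1 n) * a p * tau n (snd p) * sigma n (fst p) + b p * tau n (fst p)"

definition V_coeff :: "nat \<Rightarrow> (nat \<times> nat \<Rightarrow> real) \<Rightarrow> (nat \<times> nat \<Rightarrow> real) \<Rightarrow> nat \<times> nat \<Rightarrow> real" where
  "V_coeff n a b p
    = - of_bool (p \<in> I1 n) * a p * tau n (fst p) * sigma n (snd p) + b p * tau n (snd p)"

lemma U_combination:
  "(\<Sum>p\<in>I1 n. a p * U1 n (fst p) (snd p) r c) + (\<Sum>p\<in>I0 n. b p * U0 n (fst p) (snd p) r c)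
    = (\<Sum>p\<in>{1..n} \<times> {0..n}. U_coeff n a b p * tensor (sbar n) (ctil n) p (r, c))"
proof -
  have "(\<Sum>p\<in>I1 n. a p * U1 n (fst p) (snd p) r c)
      = (\<Sum>p\<in>{1..n} \<times> {0..n}. of_bool (p \<in> I1 n) * (a p * U1 n (fst p) (snd p) r c))"
  proof -
    have "({1..n} \<times> {0..n}) \<inter> {p. p \<in> I1 n} = I1 n" by (auto simp: I1_def)
    then show ?thesis by simp
  qed
  moreover have "(\<Sum>p\<in>I0 n. b p * U0 n (fst p) (snd p) r c)
      = (\<Sum>p\<in>{1..n} \<times> {0..n}. b p * U0 n (fst p) (snd p) r c)"
    by (rule sum.mono_neutral_right) (auto simp: I0_def U0_def outer_def Suc_le_eq)
  ultimately show ?thesis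
    by (simp add: U_coeff_def U1_def U0_def outer_def tensor_def algebra_simps flip: sum.distrib)
qed

lemma V_combination:
  "(\<Sum>p\<in>I1 n. a p * V1 n (fst p) (snd p) r c) + (\<Sum>p\<in>I0 n. b p * V0 n (fst p) (snd p) r c)
    = (\<Sum>p\<in>{0..n} \<times> {1..n}. V_coeff n a b p * tensor (ctil n) (sbar n) p (r, c))"
proof -
  have "(\<Sum>p\<in>I1 n. a p * V1 n (fst p) (snd p) r c)
      = (\<Sum>p\<in>{0..n} \<times> {1..n}. of_bool (p \<in> I1 n) * (a p * V1 n (fst p) (snd p) r c))"
  proof -
    have "({0..n} \<times> {1..n}) \<inter> {p. p \<in> I1 n} = I1 n" by (auto simp: I1_def)
    then show ?thesis by simp
  qed
  moreover have "(\<Sum>p\<in>I0 n. b p * V0 n (fst p) (snd p) r c)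
      = (\<Sum>p\<in>{0..n} \<times> {1..n}. b p * V0 n (fst p) (snd p) r c)"
    by (rule sum.mono_neutral_right) (auto simp: I0_def V0_def outer_def Suc_le_eq)
  ultimately show ?thesis
    by (simp add: V_coeff_def V1_def V0_def outer_def tensor_def algebra_simps flip: sum.distrib)
qed

lemma det2_zero_solution:
  fixes a b c d x y :: real
  assumes "a * d - b * c \<noteq> 0" and "a * x + b * y = 0" and "c * x + d * y = 0"
  shows "x = 0 \<and> y = 0"
proof -
  have "(a * d - b * c) * x = 0" "(a * d - b * c) * y = 0"
    using assms(2,3) by algebra+
  then show ?thesis using assms(1) by simp
qed

lemma det2_solvable:
  fixes a b c d u v :: real
  assumes det: "a * d - b * c \<noteq> 0"
  shows "\<exists>x y. a * x + b * y = u \<and> c * x + d * y = v"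
proof (intro exI conjI)
  let ?D = "a * d - b * c"
  have "a * (d * u - b * v) + b * (a * v - c * u) = ?D * u"
       "c * (d * u - b * v) + d * (a * v - c * u) = ?D * v"
    by algebra+
  then show "a * ((d * u - b * v) / ?D) + b * ((a * v - c * u) / ?D) = u"
       and "c * ((d * u - b * v) / ?D) + d * ((a * v - c * u) / ?D) = v"
    using det by (simp_all only: times_divide_eq_right add_divide_distrib[symmetric]) simp_all
qed

lemma coupling_det_nonzero:
  assumes "1 \<le> i" "i \<le> n" "1 \<le> j" "j \<le> n"
  shows "tau n j * sigma n i * tau n j - tau n i * (- tau n i * sigma n j) \<noteq> 0"
proof -
  have "0 < (tau n j)\<^sup>2 * sigma n i + (tau n i)\<^sup>2 * sigma n j"
    using tau_nonzero[of i n] tau_nonzero[of j n] sigma_pos[of n i] sigma_pos[of n j] assms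
    by (simp add: add_pos_pos)
  then show ?thesis by (simp add: power2_eq_square algebra_simps)
qed

lemma coeffs_zero_imp_zero:
  assumes U: "\<forall>p\<in>{1..n} \<times> {0..n}. U_coeff n a b p = 0"
    and V: "\<forall>p\<in>{0..n} \<times> {1..n}. V_coeff n a b p = 0"
  shows "(\<forall>p\<in>I1 n. a p = 0) \<and> (\<forall>p\<in>I0 n. b p = 0)"
proof -
  have interior: "a (i, j) = 0 \<and> b (i, j) = 0" if ij: "1 \<le> i" "i \<le> n" "1 \<le> j" "j \<le> n" for i j
  proof (rule det2_zero_solution[OF coupling_det_nonzero[OF ij]])
    have "U_coeff n a b (i, j) = 0" "V_coeff n a b (i, j) = 0"
      using U V ij by auto
    then show "tau n j * sigma n i * a (i, j) + tau n i * b (i, j) = 0"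
      and "- tau n i * sigma n j * a (i, j) + tau n j * b (i, j) = 0"
      using ij by (simp_all add: U_coeff_def V_coeff_def I1_def algebra_simps)
  qed
  have "b (i, 0) = 0" if "1 \<le> i" "i \<le> n" for i
  proof -
    have "U_coeff n a b (i, 0) = 0" using U that by auto
    then show ?thesis using tau_nonzero[OF that] by (simp add: U_coeff_def I1_def)
  qed
  moreover have "b (0, j) = 0" if "1 \<le> j" "j \<le> n" for j
  proof -
    have "V_coeff n a b (0, j) = 0" using V that by auto
    then show ?thesis using tau_nonzero[OF that] by (simp add: V_coeff_def I1_def)
  qed
  ultimately have "b (i, j) = 0" if "(i, j) \<in> I0 n" for i j
    using that interior[of i j] by (cases "i = 0"; cases "j = 0") (auto simp: I0_def)
  then show ?thesis
    using interior by (auto simp: I1_def)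
qed

lemma coeffs_surjective:
  "\<exists>a b. (\<forall>p\<in>{1..n} \<times> {0..n}. U_coeff n a b p = \<alpha> p) \<and> (\<forall>p\<in>{0..n} \<times> {1..n}. V_coeff n a b p = \<beta> p)"
proof -
  have "\<exists>x y. (p \<in> {1..n} \<times> {0..n} \<longrightarrow> U_coeff n (\<lambda>_. x) (\<lambda>_. y) p = \<alpha> p)
            \<and> (p \<in> {0..n} \<times> {1..n} \<longrightarrow> V_coeff n (\<lambda>_. x) (\<lambda>_. y) p = \<beta> p)" for p
  proof -
    obtain i j where p: "p = (i, j)" by fastforce
    consider "1 \<le> i" "i \<le> n" "1 \<le> j" "j \<le> n" | "1 \<le> i" "i \<le> n" "j = 0" | "1 \<le> j" "j \<le> n" "i = 0"
      | "p \<notin> {1..n} \<times> {0..n}" "p \<notin> {0..n} \<times> {1..n}"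
      using p by fastforce
    then show ?thesis
    proof cases
      case 1
      then show ?thesis
        using det2_solvable[OF coupling_det_nonzero[OF 1], of "\<alpha> p" "\<beta> p"] p
        by (auto simp: U_coeff_def V_coeff_def I1_def algebra_simps)
    next
      case 2
      then show ?thesis
        using p tau_nonzero[of i n]
        by (intro exI[of _ 0] exI[of _ "\<alpha> p / tau n i"]) (auto simp: U_coeff_def I1_def)
    next
      case 3
      then show ?thesis
        using p tau_nonzero[of j n]
        by (intro exI[of _ 0] exI[of _ "\<beta> p / tau n j"]) (auto simp: V_coeff_def I1_def)
    qed blast
  qed
  then obtain x y where "\<forall>p. (p \<in> {1..n} \<times> {0..n} \<longrightarrow> U_coeff n (\<lambda>_. x p) (\<lambda>_. y p) p = \<alpha> p)
            \<and> (p \<in> {0..n} \<times> {1..n} \<longrightarrow> V_coeff n (\<lambda>_. x p) (\<lambda>_. y p) p = \<beta> p)"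
    by metis
  then show ?thesis
    by (intro exI[of _ x] exI[of _ y]) (simp add: U_coeff_def V_coeff_def)
qed

lemma eigenfamily_independent:
  assumes n: "1 \<le> n"
    and U: "\<forall>r<n. \<forall>c<n + 1.
      (\<Sum>p\<in>I1 n. a p * U1 n (fst p) (snd p) r c) + (\<Sum>p\<in>I0 n. b p * U0 n (fst p) (snd p) r c) = 0"
    and V: "\<forall>r<n + 1. \<forall>c<n.
      (\<Sum>p\<in>I1 n. a p * V1 n (fst p) (snd p) r c) + (\<Sum>p\<in>I0 n. b p * V0 n (fst p) (snd p) r c) = 0"
  shows "(\<forall>p\<in>I1 n. a p = 0) \<and> (\<forall>p\<in>I0 n. b p = 0)"
proof (rule coeffs_zero_imp_zero)
  have "0 < n" using n by simp
  then show "\<forall>p\<in>{1..n} \<times> {0..n}. U_coeff n a b p = 0"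
    and "\<forall>p\<in>{0..n} \<times> {1..n}. V_coeff n a b p = 0"
    using sbar_ctil_basis_independent ctil_sbar_basis_independent U V
    unfolding U_combination V_combination by blast+
qed

lemma eigenfamily_spans:
  assumes n: "1 \<le> n"
  shows "\<exists>a b.
    (\<forall>r<n. \<forall>c<n + 1.
      X r c = (\<Sum>p\<in>I1 n. a p * U1 n (fst p) (snd p) r c) + (\<Sum>p\<in>I0 n. b p * U0 n (fst p) (snd p) r c))
  \<and> (\<forall>r<n + 1. \<forall>c<n.
      Y r c = (\<Sum>p\<in>I1 n. a p * V1 n (fst p) (snd p) r c) + (\<Sum>p\<in>I0 n. b p * V0 n (fst p) (snd p) r c))"
proof -
  have n0: "0 < n" using n by simp
  obtain \<alpha> where \<alpha>:
      "\<forall>r<n. \<forall>c<n+1. X r c = (\<Sum>p\<in>{1..n} \<times> {0..n}. \<alpha> p * tensor (sbar n) (ctil n) p (r, c))"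
    using sbar_ctil_basis_spans[OF n0] by blast
  obtain \<beta> where \<beta>:
      "\<forall>r<n+1. \<forall>c<n. Y r c = (\<Sum>p\<in>{0..n} \<times> {1..n}. \<beta> p * tensor (ctil n) (sbar n) p (r, c))"
    using ctil_sbar_basis_spans[OF n0] by blast
  obtain a b where a: "\<forall>p\<in>{1..n} \<times> {0..n}. U_coeff n a b p = \<alpha> p"
    and b: "\<forall>p\<in>{0..n} \<times> {1..n}. V_coeff n a b p = \<beta> p"
    using coeffs_surjective by blast
  have "X r c = (\<Sum>p\<in>{1..n} \<times> {0..n}. U_coeff n a b p * tensor (sbar n) (ctil n) p (r, c))"
    if "r < n" "c < n + 1" for r c
    using \<alpha> a that by (auto intro: sum.cong)
  moreover have "Y r c = (\<Sum>p\<in>{0..n} \<times> {1..n}. V_coeff n a b p * tensor (ctil n) (sbar n) p (r, c))"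
    if "r < n + 1" "c < n" for r c
    using \<beta> b that by (auto intro: sum.cong)
  ultimately show ?thesis
    unfolding U_combination V_combination by blast
qed

theorem theorem5p1:
  fixes n :: nat
  assumes "n \<ge> 1"
  shows "card (I1 n) + card (I0 n) = 2 * n * (n + 1)
    \<and> (\<forall>(i, j) \<in> I1 n.
         is_eigensol n (lam1 n i j) (U1 n i j) (V1 n i j) \<and> div_free n (U1 n i j) (V1 n i j))
    \<and> (\<forall>(i, j) \<in> I0 n. is_eigensol n 0 (U0 n i j) (V0 n i j))
    \<and> (\<forall>a b :: nat \<times> nat \<Rightarrow> real.
         ((\<forall>r<n. \<forall>c<n + 1.
             (\<Sum>p\<in>I1 n. a p * U1 n (fst p) (snd p) r c)
           + (\<Sum>p\<in>I0 n. b p * U0 n (fst p) (snd p) r c) = 0)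
        \<and> (\<forall>r<n + 1. \<forall>c<n.
             (\<Sum>p\<in>I1 n. a p * V1 n (fst p) (snd p) r c)
           + (\<Sum>p\<in>I0 n. b p * V0 n (fst p) (snd p) r c) = 0))
        \<longrightarrow> (\<forall>p\<in>I1 n. a p = 0) \<and> (\<forall>p\<in>I0 n. b p = 0))
    \<and> (\<forall>X Y :: nat \<Rightarrow> nat \<Rightarrow> real. \<exists>a b :: nat \<times> nat \<Rightarrow> real.
         (\<forall>r<n. \<forall>c<n + 1.
             X r c = (\<Sum>p\<in>I1 n. a p * U1 n (fst p) (snd p) r c)
                   + (\<Sum>p\<in>I0 n. b p * U0 n (fst p) (snd p) r c))
       \<and> (\<forall>r<n + 1. \<forall>c<n.
             Y r c = (\<Sum>p\<in>I1 n. a p * V1 n (fst p) (snd p) r c)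
                   + (\<Sum>p\<in>I0 n. b p * V0 n (fst p) (snd p) r c)))"
proof -
  have card: "card (I1 n) + card (I0 n) = 2 * n * (n + 1)"
    by (simp add: I1_def I0_def card_cartesian_product algebra_simps)
  have "\<forall>(i, j) \<in> I1 n.
      is_eigensol n (lam1 n i j) (U1 n i j) (V1 n i j) \<and> div_free n (U1 n i j) (V1 n i j)"
    using divergence_free_eigensol[OF assms] by blast
  moreover have "\<forall>(i, j) \<in> I0 n. is_eigensol n 0 (U0 n i j) (V0 n i j)"
    using gradient_eigensol[OF assms] by blast
  ultimately show ?thesis
    using card eigenfamily_independent[OF assms] eigenfamily_spans[OF assms] by blast
qed

end
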